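(* Let $(L,\vee,\wedge,f,g,0,1)$ be a BDLGC-algebra. Then there exists a GC-frame $\mathcal{F}=(X,\leq,R)$ such that $(L,\vee,\wedge,f,g,0,1)$ is isomorphic to a subalgebra of the complex algebra $\mathbb{BDL}_{\rm GC}(\mathcal{F})=(\mathcal{T}_\leq,\cup,\cap,{}^\blacktriangle,{}^\blacktriangledown,\emptyset,X)$. If $L$ is finite, then $(L,\vee,\wedge,f,g,0,1)$ is isomorphic to $\mathbb{BDL}_{\rm GC}(\mathcal{F})$.
   Context: A BDLGC-algebra $(L,\vee,\wedge,f,g,0,1)$ is a bounded distributive lattice $(L,\vee,\wedge,0,1)$ with maps $f,g\colon L\to L$ forming an order-preserving Galois connection: $f(a)\leq b\iff a\leq g(b)$ for all $a,b\in L$. A GC-frame $(X,\leq,R)$ is a set $X$ with a quasiorder $\leq$ and a relation $R\subseteq X\times X$ such that $x\leq x'$, $x\,R\,y$, $y'\leq y$ imply $x'\,R\,y'$. $\mathcal{T}_\leq$ is the set of upward $\leq$-closed subsets of $X$. For $A\subseteq X$: $A^\blacktriangle=\{x\mid x\,R\,y\text{ for some }y\in A\}$ and $A^\blacktriangledown=\{x\mid \text{for all }y,\ y\,R\,x\text{ implies }y\in A\}$. The complex algebra $\mathbb{BDL}_{\rm GC}(\mathcal{F})$ is $(\mathcal{T}_\leq,\cup,\cap,{}^\blacktriangle,{}^\blacktriangledown,\emptyset,X)$; isomorphisms preserve $\vee,\wedge,f,g,0,1$ with $f\leftrightarrow{}^\blacktriangle$, $g\leftrightarrow{}^\blacktriangledown$.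 *)

theory Defs
  imports Main
begin

definition bdlgc :: "('a::{distrib_lattice,bounded_lattice} \<Rightarrow> 'a) \<Rightarrow> ('a \<Rightarrow> 'a) \<Rightarrow> bool" where
  "bdlgc f g \<longleftrightarrow> (\<forall>a b. f a \<le> b \<longleftrightarrow> a \<le> g b)"

definition gc_frame :: "'b set \<Rightarrow> ('b \<Rightarrow> 'b \<Rightarrow> bool) \<Rightarrow> ('b \<Rightarrow> 'b \<Rightarrow> bool) \<Rightarrow> bool" where
  "gc_frame X le R \<longleftrightarrow>
     (\<forall>x\<in>X. le x x) \<and>
     (\<forall>x\<in>X. \<forall>y\<in>X. \<forall>z\<in>X. le x y \<longrightarrow> le y z \<longrightarrow> le x z) \<and>
     (\<forall>x y. le x y \<longrightarrow> x \<in> X \<and> y \<in> X) \<and>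
     (\<forall>x y. R x y \<longrightarrow> x \<in> X \<and> y \<in> X) \<and>
     (\<forall>x x' y y'. le x x' \<longrightarrow> R x y \<longrightarrow> le y' y \<longrightarrow> R x' y')"

definition upsets :: "'b set \<Rightarrow> ('b \<Rightarrow> 'b \<Rightarrow> bool) \<Rightarrow> 'b set set" where
  "upsets X le = {A. A \<subseteq> X \<and> (\<forall>x\<in>A. \<forall>y\<in>X. le x y \<longrightarrow> y \<in> A)}"

definition btri_up :: "'b set \<Rightarrow> ('b \<Rightarrow> 'b \<Rightarrow> bool) \<Rightarrow> 'b set \<Rightarrow> 'b set" where
  "btri_up X R A = {x\<in>X. \<exists>y\<in>A. R x y}"

definition btri_down :: "'b set \<Rightarrow> ('b \<Rightarrow> 'b \<Rightarrow> bool) \<Rightarrow> 'b set \<Rightarrow> 'b set" where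
  "btri_down X R A = {x\<in>X. \<forall>y\<in>X. R y x \<longrightarrow> y \<in> A}"

text \<open>h is a homomorphism from (L,sup,inf,f,g,bot,top) into the complex algebra
  BDL_GC(X,le,R) = (upsets, union, inter, btri_up, btri_down, {}, X).\<close>
definition gc_hom :: "('a::{distrib_lattice,bounded_lattice} \<Rightarrow> 'a) \<Rightarrow> ('a \<Rightarrow> 'a) \<Rightarrow>
    'b set \<Rightarrow> ('b \<Rightarrow> 'b \<Rightarrow> bool) \<Rightarrow> ('b \<Rightarrow> 'b \<Rightarrow> bool) \<Rightarrow> ('a \<Rightarrow> 'b set) \<Rightarrow> bool" where
  "gc_hom f g X le R h \<longleftrightarrow>
     (\<forall>a. h a \<in> upsets X le) \<and>
     (\<forall>a b. h (sup a b) = h a \<union> h b) \<and>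
     (\<forall>a b. h (inf a b) = h a \<inter> h b) \<and>
     (\<forall>a. h (f a) = btri_up X R (h a)) \<and>
     (\<forall>a. h (g a) = btri_down X R (h a)) \<and>
     h bot = {} \<and> h top = X"

end

theory Submission
  imports Defs
begin

text \<open>This is the Stone/Jonsson--Tarski representation. The points of the frame are the prime
  filters of L, ordered by inclusion, with P R Q iff f maps Q into P, and a is sent to the set of
  prime filters containing it. The prime filter theorem makes this map injective and shows that
  it turns f into the existential and g into the universal modality of R: for f one separates the
  principal filter of a from the ideal of elements whose f-image lies outside P, for g the filter
  generated by f[P] from the principal ideal of a, using f(x) \<le> a \<longleftrightarrow> x \<le> g(a). In a finite
  lattice every filter is principal, and an upset U of prime filters is the image of the join of
  their generators.\<close>

definition lattice_filter :: "'a::lattice set \<Rightarrow> bool" where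
  "lattice_filter F \<longleftrightarrow>
     F \<noteq> {} \<and> (\<forall>x\<in>F. \<forall>y. x \<le> y \<longrightarrow> y \<in> F) \<and> (\<forall>x\<in>F. \<forall>y\<in>F. inf x y \<in> F)"

definition lattice_ideal :: "'a::lattice set \<Rightarrow> bool" where
  "lattice_ideal I \<longleftrightarrow>
     I \<noteq> {} \<and> (\<forall>x\<in>I. \<forall>y. y \<le> x \<longrightarrow> y \<in> I) \<and> (\<forall>x\<in>I. \<forall>y\<in>I. sup x y \<in> I)"

definition prime_filter :: "'a::bounded_lattice set \<Rightarrow> bool" where
  "prime_filter P \<longleftrightarrow>
     lattice_filter P \<and> bot \<notin> P \<and> (\<forall>a b. sup a b \<in> P \<longrightarrow> a \<in> P \<or> b \<in> P)"

lemma prime_filter_upward: "prime_filter P \<Longrightarrow> x \<in> P \<Longrightarrow> x \<le> y \<Longrightarrow> y \<in> P"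
  unfolding prime_filter_def lattice_filter_def by blast

lemma lattice_filter_atLeast: "lattice_filter {a..}"
  unfolding lattice_filter_def by auto

lemma lattice_ideal_atMost: "lattice_ideal {..a}"
  unfolding lattice_ideal_def by auto

lemma lattice_filter_upclosure_image:
  fixes F :: "'a::lattice set" and \<phi> :: "'a \<Rightarrow> 'b::lattice"
  assumes F: "lattice_filter F" and "mono \<phi>"
  shows "lattice_filter {x. \<exists>p\<in>F. \<phi> p \<le> x}"
  unfolding lattice_filter_def
proof (intro conjI ballI allI impI)
  obtain p where "p \<in> F" using F unfolding lattice_filter_def by auto
  then show "{x. \<exists>p\<in>F. \<phi> p \<le> x} \<noteq> {}" by blast
next
  fix x y assume "x \<in> {x. \<exists>p\<in>F. \<phi> p \<le> x}" "x \<le> y"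
  then show "y \<in> {x. \<exists>p\<in>F. \<phi> p \<le> x}" by (blast intro: order_trans)
next
  fix x y assume "x \<in> {x. \<exists>p\<in>F. \<phi> p \<le> x}" "y \<in> {x. \<exists>p\<in>F. \<phi> p \<le> x}"
  then obtain p q where pq: "p \<in> F" "q \<in> F" "\<phi> p \<le> x" "\<phi> q \<le> y" by blast
  have "inf p q \<in> F" using F pq(1,2) unfolding lattice_filter_def by blast
  moreover have "\<phi> (inf p q) \<le> \<phi> p" "\<phi> (inf p q) \<le> \<phi> q"
    using \<open>mono \<phi>\<close> by (simp_all add: monoD)
  then have "\<phi> (inf p q) \<le> inf x y" using pq(3,4) by (meson le_infI order_trans)
  ultimately show "inf x y \<in> {x. \<exists>p\<in>F. \<phi> p \<le> x}" by blast
qed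

lemma lattice_filter_Union_chain:
  assumes "C \<noteq> {}" and filters: "\<And>F. F \<in> C \<Longrightarrow> lattice_filter F" and "chain\<^sub>\<subseteq> C"
  shows "lattice_filter (\<Union>C)"
  unfolding lattice_filter_def
proof (intro conjI ballI allI impI)
  obtain F where "F \<in> C" using \<open>C \<noteq> {}\<close> by blast
  moreover have "F \<noteq> {}" using filters[OF \<open>F \<in> C\<close>] unfolding lattice_filter_def by blast
  ultimately show "\<Union>C \<noteq> {}" by blast
next
  fix x y assume "x \<in> \<Union>C" "x \<le> y"
  then show "y \<in> \<Union>C" using filters unfolding lattice_filter_def by blast
next
  fix x y assume "x \<in> \<Union>C" "y \<in> \<Union>C"
  then obtain F where "F \<in> C" "x \<in> F" "y \<in> F"
    using \<open>chain\<^sub>\<subseteq> C\<close> unfolding chain_subset_def by blast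
  then show "inf x y \<in> \<Union>C" using filters unfolding lattice_filter_def by blast
qed

lemma maximal_disjoint_filter_prime:
  fixes M I :: "'a::{distrib_lattice,bounded_lattice} set"
  assumes M: "lattice_filter M" and I: "lattice_ideal I" and disj: "M \<inter> I = {}"
    and maximal: "\<And>G. lattice_filter G \<Longrightarrow> M \<subseteq> G \<Longrightarrow> G \<inter> I = {} \<Longrightarrow> G = M"
  shows "prime_filter M"
proof -
  have meets_ideal: "\<exists>p\<in>M. \<exists>i\<in>I. inf p a \<le> i" if "a \<notin> M" for a
  proof (rule ccontr)
    assume "\<not> ?thesis"
    then have "{x. \<exists>p\<in>M. inf p a \<le> x} \<inter> I = {}" by blast
    moreover have "M \<subseteq> {x. \<exists>p\<in>M. inf p a \<le> x}" by (auto intro: inf_le1)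
    moreover have "mono (\<lambda>p. inf p a)" by (rule monoI) (simp add: le_infI1)
    then have "lattice_filter {x. \<exists>p\<in>M. inf p a \<le> x}"
      using lattice_filter_upclosure_image[OF M] by blast
    ultimately have "{x. \<exists>p\<in>M. inf p a \<le> x} = M" using maximal by blast
    moreover obtain p where "p \<in> M" using M unfolding lattice_filter_def by auto
    ultimately show False using \<open>a \<notin> M\<close> inf_le2[of p a] by blast
  qed
  have "a \<in> M \<or> b \<in> M" if ab: "sup a b \<in> M" for a b
  proof (rule ccontr)
    assume "\<not> (a \<in> M \<or> b \<in> M)"
    then obtain p q i j where pq: "p \<in> M" "q \<in> M" and ij: "i \<in> I" "j \<in> I"
      and pa: "inf p a \<le> i" and qb: "inf q b \<le> j"
      using meets_ideal by meson
    have "inf (inf p q) a \<le> i" using pa by (meson inf_le1 inf_mono order.refl order_trans)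
    moreover have "inf (inf p q) b \<le> j" using qb by (meson inf_le2 inf_mono order.refl order_trans)
    ultimately have "inf (inf p q) (sup a b) \<le> sup i j"
      by (simp add: inf_sup_distrib1 le_supI1 le_supI2)
    moreover have "inf (inf p q) (sup a b) \<in> M"
      using M pq ab unfolding lattice_filter_def by blast
    moreover have "sup i j \<in> I" using I ij unfolding lattice_ideal_def by blast
    ultimately show False using I disj unfolding lattice_ideal_def by blast
  qed
  moreover have "bot \<notin> M" using I disj unfolding lattice_ideal_def by auto
  ultimately show ?thesis using M unfolding prime_filter_def by blast
qed

theorem prime_filter_separation:
  fixes F I :: "'a::{distrib_lattice,bounded_lattice} set"
  assumes F: "lattice_filter F" and I: "lattice_ideal I" and disj: "F \<inter> I = {}"
  shows "\<exists>P. prime_filter P \<and> F \<subseteq> P \<and> P \<inter> I = {}"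
proof -
  let ?S = "{G. lattice_filter G \<and> F \<subseteq> G \<and> G \<inter> I = {}}"
  have "\<forall>C\<in>chains ?S. \<exists>U\<in>?S. \<forall>G\<in>C. G \<subseteq> U"
  proof
    fix C assume "C \<in> chains ?S"
    show "\<exists>U\<in>?S. \<forall>G\<in>C. G \<subseteq> U"
    proof (cases "C = {}")
      case True
      then show ?thesis using F disj by blast
    next
      case False
      have "C \<subseteq> ?S" "chain\<^sub>\<subseteq> C" using \<open>C \<in> chains ?S\<close> unfolding chains_def by auto
      then have "lattice_filter (\<Union>C)" "F \<subseteq> \<Union>C" "\<Union>C \<inter> I = {}"
        using lattice_filter_Union_chain[OF False] False by blast+
      then show ?thesis by blast
    qed
  qed
  from Zorn_Lemma2[OF this]
  obtain M where M: "M \<in> ?S" and maximal: "\<forall>G\<in>?S. M \<subseteq> G \<longrightarrow> G = M"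
    by (elim bexE)
  have "prime_filter M"
  proof (rule maximal_disjoint_filter_prime[OF _ I])
    show "lattice_filter M" "M \<inter> I = {}" using M by blast+
    show "G = M" if "lattice_filter G" "M \<subseteq> G" "G \<inter> I = {}" for G
      using maximal that M by blast
  qed
  then show ?thesis using M by blast
qed

corollary prime_filter_separates_elements:
  fixes a b :: "'a::{distrib_lattice,bounded_lattice}"
  assumes "\<not> a \<le> b"
  shows "\<exists>P. prime_filter P \<and> a \<in> P \<and> b \<notin> P"
proof -
  have "{a..} \<inter> {..b} = {}" using assms by (auto intro: order_trans)
  from prime_filter_separation[OF lattice_filter_atLeast lattice_ideal_atMost this]
  obtain P where "prime_filter P" "{a..} \<subseteq> P" "P \<inter> {..b} = {}" by blast
  then show ?thesis by auto
qed

lemma bdlgc_sup: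
  assumes "bdlgc f g"
  shows "f (sup a b) = sup (f a) (f b)"
proof -
  have "f (sup a b) \<le> c \<longleftrightarrow> sup (f a) (f b) \<le> c" for c
    using assms unfolding bdlgc_def by simp
  then show ?thesis by (meson order.antisym order.refl)
qed

lemma bdlgc_bot:
  assumes "bdlgc f g"
  shows "f bot = bot"
proof -
  have "f bot \<le> bot" using assms unfolding bdlgc_def by simp
  then show ?thesis by (rule bot.extremum_uniqueI)
qed

lemma mono_if_sup_preserving:
  fixes f :: "'a::semilattice_sup \<Rightarrow> 'b::semilattice_sup"
  assumes "\<And>a b. f (sup a b) = sup (f a) (f b)"
  shows "mono f"
proof (rule monoI)
  fix x y :: 'a assume "x \<le> y"
  then have "f y = sup (f x) (f y)" using assms[of x y] by (simp add: sup_absorb2)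
  then show "f x \<le> f y" by (metis sup_ge1)
qed

lemma lattice_ideal_vimage_prime_filter_compl:
  fixes f :: "'a::bounded_lattice \<Rightarrow> 'b::bounded_lattice"
  assumes P: "prime_filter P"
    and sup_hom: "\<And>a b. f (sup a b) = sup (f a) (f b)" and "f bot = bot"
  shows "lattice_ideal {x. f x \<notin> P}"
  unfolding lattice_ideal_def
proof (intro conjI ballI allI impI)
  have "bot \<in> {x. f x \<notin> P}" using P \<open>f bot = bot\<close> unfolding prime_filter_def by simp
  then show "{x. f x \<notin> P} \<noteq> {}" by blast
next
  fix x y assume "x \<in> {x. f x \<notin> P}" "y \<le> x"
  moreover have "f y \<le> f x" using mono_if_sup_preserving[OF sup_hom] \<open>y \<le> x\<close> by (rule monoD)
  ultimately show "y \<in> {x. f x \<notin> P}" using prime_filter_upward[OF P] by blast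
next
  fix x y assume "x \<in> {x. f x \<notin> P}" "y \<in> {x. f x \<notin> P}"
  then show "sup x y \<in> {x. f x \<notin> P}" using P sup_hom unfolding prime_filter_def by auto
qed

definition prime_filters :: "'a::bounded_lattice set set" where
  "prime_filters = Collect prime_filter"

definition prime_filter_le :: "'a::bounded_lattice set \<Rightarrow> 'a set \<Rightarrow> bool" where
  "prime_filter_le P Q \<longleftrightarrow> P \<in> prime_filters \<and> Q \<in> prime_filters \<and> P \<subseteq> Q"

definition canonical_rel :: "('a::bounded_lattice \<Rightarrow> 'a) \<Rightarrow> 'a set \<Rightarrow> 'a set \<Rightarrow> bool" where
  "canonical_rel f P Q \<longleftrightarrow> P \<in> prime_filters \<and> Q \<in> prime_filters \<and> f ` Q \<subseteq> P"

definition stone_map :: "'a::bounded_lattice \<Rightarrow> 'a set set" where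
  "stone_map a = {P \<in> prime_filters. a \<in> P}"

lemma gc_frame_prime_filters: "gc_frame prime_filters prime_filter_le (canonical_rel f)"
  unfolding gc_frame_def prime_filter_le_def canonical_rel_def by blast

lemma stone_map_upset: "stone_map a \<in> upsets prime_filters prime_filter_le"
  unfolding upsets_def stone_map_def prime_filter_le_def by blast

lemma stone_map_sup: "stone_map (sup a b) = stone_map a \<union> stone_map b"
  unfolding stone_map_def prime_filters_def
  by (auto intro: prime_filter_upward simp: prime_filter_def)

lemma stone_map_inf: "stone_map (inf a b) = stone_map a \<inter> stone_map b"
  unfolding stone_map_def prime_filters_def
  by (auto intro: prime_filter_upward simp: prime_filter_def lattice_filter_def)

lemma stone_map_bot: "stone_map bot = {}"
  unfolding stone_map_def prime_filters_def prime_filter_def by blast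

lemma stone_map_top: "stone_map top = prime_filters"
  unfolding stone_map_def prime_filters_def prime_filter_def lattice_filter_def by auto

lemma inj_stone_map: "inj (stone_map :: 'a::{distrib_lattice,bounded_lattice} \<Rightarrow> _)"
proof (rule injI)
  have le_if_stone_map_eq: "a \<le> b" if "stone_map a = stone_map b" for a b :: 'a
    using prime_filter_separates_elements[of a b] that
    unfolding stone_map_def prime_filters_def by blast
  show "a = b" if "stone_map a = stone_map b" for a b :: 'a
    using le_if_stone_map_eq[OF that] le_if_stone_map_eq[OF that[symmetric]] by (rule order.antisym)
qed

lemma stone_map_diamond:
  fixes f :: "'a::{distrib_lattice,bounded_lattice} \<Rightarrow> 'a"
  assumes sup_hom: "\<And>a b. f (sup a b) = sup (f a) (f b)" and bot_hom: "f bot = bot"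
  shows "stone_map (f a) = btri_up prime_filters (canonical_rel f) (stone_map a)"
proof (intro equalityI subsetI)
  fix P assume "P \<in> stone_map (f a)"
  then have P: "prime_filter P" and "f a \<in> P" unfolding stone_map_def prime_filters_def by auto
  have "f x \<in> P" if "a \<le> x" for x
    using prime_filter_upward[OF P \<open>f a \<in> P\<close>] mono_if_sup_preserving[OF sup_hom] that
    by (simp add: monoD)
  then have "{a..} \<inter> {x. f x \<notin> P} = {}" by auto
  from prime_filter_separation[OF lattice_filter_atLeast
      lattice_ideal_vimage_prime_filter_compl[OF P sup_hom bot_hom] this]
  obtain Q where "prime_filter Q" "{a..} \<subseteq> Q" "Q \<inter> {x. f x \<notin> P} = {}" by blast
  then have "prime_filter Q" "a \<in> Q" "f ` Q \<subseteq> P" by auto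
  then show "P \<in> btri_up prime_filters (canonical_rel f) (stone_map a)"
    using P unfolding btri_up_def canonical_rel_def stone_map_def prime_filters_def by blast
next
  fix P assume "P \<in> btri_up prime_filters (canonical_rel f) (stone_map a)"
  then show "P \<in> stone_map (f a)"
    unfolding btri_up_def canonical_rel_def stone_map_def by blast
qed

lemma stone_map_box:
  fixes f g :: "'a::{distrib_lattice,bounded_lattice} \<Rightarrow> 'a"
  assumes gc: "bdlgc f g"
  shows "stone_map (g a) = btri_down prime_filters (canonical_rel f) (stone_map a)"
proof (intro equalityI subsetI)
  fix P assume "P \<in> stone_map (g a)"
  then have "P \<in> prime_filters" and "f (g a) \<in> f ` P" unfolding stone_map_def by auto
  moreover have "f (g a) \<le> a" using gc unfolding bdlgc_def by blast
  ultimately show "P \<in> btri_down prime_filters (canonical_rel f) (stone_map a)"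
    unfolding btri_down_def canonical_rel_def stone_map_def prime_filters_def
    by (blast intro: prime_filter_upward)
next
  fix P assume P_box: "P \<in> btri_down prime_filters (canonical_rel f) (stone_map a)"
  then have P: "prime_filter P" unfolding btri_down_def prime_filters_def by blast
  show "P \<in> stone_map (g a)"
  proof (rule ccontr)
    assume "P \<notin> stone_map (g a)"
    then have "g a \<notin> P" using P unfolding stone_map_def prime_filters_def by blast
    have "p \<le> g a" if "f p \<le> x" "x \<le> a" for p x
      using gc that unfolding bdlgc_def by (meson order_trans)
    then have disj: "{x. \<exists>p\<in>P. f p \<le> x} \<inter> {..a} = {}"
      using prime_filter_upward[OF P] \<open>g a \<notin> P\<close> by blast
    have "lattice_filter {x. \<exists>p\<in>P. f p \<le> x}"
      using lattice_filter_upclosure_image mono_if_sup_preserving[OF bdlgc_sup[OF gc]] P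
      unfolding prime_filter_def by blast
    from prime_filter_separation[OF this lattice_ideal_atMost disj]
    obtain Q where "prime_filter Q" "{x. \<exists>p\<in>P. f p \<le> x} \<subseteq> Q" "Q \<inter> {..a} = {}"
      by blast
    then have "prime_filter Q" "f ` P \<subseteq> Q" "a \<notin> Q" by auto
    then show False
      using P_box unfolding btri_down_def canonical_rel_def stone_map_def prime_filters_def by blast
  qed
qed

lemma lattice_filter_Inf_fin_mem:
  assumes "lattice_filter F" and "finite F"
  shows "Inf_fin F \<in> F"
proof -
  have "Inf_fin A \<in> F" if "finite A" "A \<noteq> {}" "A \<subseteq> F" for A
    using that
  proof (induction A rule: finite_ne_induct)
    case (insert x A)
    then show ?case using assms(1) unfolding lattice_filter_def by simp
  qed simp
  moreover have "F \<noteq> {}" using assms(1) unfolding lattice_filter_def by simp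
  ultimately show ?thesis using assms(2) by blast
qed

lemma prime_filter_Sup_fin:
  assumes "prime_filter P" and "finite A" "A \<noteq> {}" and "Sup_fin A \<in> P"
  shows "\<exists>x\<in>A. x \<in> P"
  using assms(2-4)
proof (induction A rule: finite_ne_induct)
  case (insert x A)
  then show ?case using assms(1) unfolding prime_filter_def by auto
qed simp

lemma lattice_filter_eq_atLeast_Inf_fin:
  assumes "lattice_filter F" and "finite F"
  shows "F = {Inf_fin F..}"
proof (intro equalityI subsetI)
  show "x \<in> {Inf_fin F..}" if "x \<in> F" for x
    using that \<open>finite F\<close> by (simp add: Inf_fin.coboundedI)
  show "x \<in> F" if "x \<in> {Inf_fin F..}" for x
    using that lattice_filter_Inf_fin_mem[OF assms] assms(1) unfolding lattice_filter_def by simp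
qed

lemma upsets_prime_filters_subset_range_stone_map:
  assumes fin: "finite (UNIV :: 'a::{distrib_lattice,bounded_lattice} set)"
  shows "upsets prime_filters prime_filter_le \<subseteq> range (stone_map :: 'a \<Rightarrow> _)"
proof
  fix U :: "'a set set" assume "U \<in> upsets prime_filters prime_filter_le"
  then have U_sub: "U \<subseteq> prime_filters"
    and U_up: "\<And>P Q. P \<in> U \<Longrightarrow> Q \<in> prime_filters \<Longrightarrow> P \<subseteq> Q \<Longrightarrow> Q \<in> U"
    unfolding upsets_def prime_filter_le_def by auto
  have principal: "P = {Inf_fin P..}" if "P \<in> U" for P
    using lattice_filter_eq_atLeast_Inf_fin that U_sub rev_finite_subset[OF fin]
    unfolding prime_filters_def prime_filter_def by blast
  show "U \<in> range stone_map"
  proof (cases "U = {}")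
    case True
    then show ?thesis using stone_map_bot by (metis rangeI)
  next
    case False
    define a where "a = Sup_fin (Inf_fin ` U)"
    have fin_gens: "finite (Inf_fin ` U)" using rev_finite_subset[OF fin] by blast
    have "stone_map a = U"
    proof (intro equalityI subsetI)
      fix P assume "P \<in> U"
      then have "Inf_fin P \<le> a" unfolding a_def using fin_gens by (simp add: Sup_fin.coboundedI)
      then have "a \<in> P" using principal[OF \<open>P \<in> U\<close>] by auto
      then show "P \<in> stone_map a" using \<open>P \<in> U\<close> U_sub unfolding stone_map_def by blast
    next
      fix P assume "P \<in> stone_map a"
      then have P: "prime_filter P" "P \<in> prime_filters" and "a \<in> P"
        unfolding stone_map_def prime_filters_def by auto
      then obtain Q where "Q \<in> U" "Inf_fin Q \<in> P"
        using prime_filter_Sup_fin[OF P(1) fin_gens] False unfolding a_def by blast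
      then have "Q \<subseteq> P" using principal prime_filter_upward[OF P(1)] by blast
      then show "P \<in> U" using U_up \<open>Q \<in> U\<close> P(2) by blast
    qed
    then show ?thesis by blast
  qed
qed

theorem proposition3p9:
  fixes f g :: "'a::{distrib_lattice,bounded_lattice} \<Rightarrow> 'a"
  assumes "bdlgc f g"
  shows "\<exists>(X :: 'a set set) le R h.
           gc_frame X le R \<and> gc_hom f g X le R h \<and> inj h \<and>
           (finite (UNIV :: 'a set) \<longrightarrow> bij_betw h UNIV (upsets X le))"
proof -
  have hom: "gc_hom f g prime_filters prime_filter_le (canonical_rel f) stone_map"
    unfolding gc_hom_def
    by (simp add: stone_map_upset stone_map_sup stone_map_inf stone_map_bot stone_map_top
        stone_map_diamond[OF bdlgc_sup[OF assms] bdlgc_bot[OF assms]] stone_map_box[OF assms])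
  have bij: "bij_betw (stone_map :: 'a \<Rightarrow> _) UNIV (upsets prime_filters prime_filter_le)"
    if "finite (UNIV :: 'a set)"
  proof -
    have "range (stone_map :: 'a \<Rightarrow> _) = upsets prime_filters prime_filter_le"
      using stone_map_upset upsets_prime_filters_subset_range_stone_map[OF that] by blast
    then show ?thesis by (simp add: bij_betw_def inj_stone_map)
  qed
  show ?thesis
    by (intro exI[of _ prime_filters] exI[of _ prime_filter_le] exI[of _ "canonical_rel f"]
        exI[of _ stone_map] conjI impI gc_frame_prime_filters hom inj_stone_map bij)
qed

end
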